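(* Let $n\ge2$, $r>0$, $\varepsilon_r>0$, $\rho^*>0$, $\omega^*\in\mathbb R$, $k_\rho,k_z,k_\phi>0$. Consider the closed-loop system, for $i=1,\dots,n$, $$\dot\rho_i=\lambda(\rho_i,\sigma(t))\,k_\rho(\rho^*-\rho_i),\qquad \dot\phi_i=\omega^*+k_\phi(\bar\phi_i-\phi_i),\qquad \dot z_i=-k_zz_i,$$ where $\sigma(t)=r/|\sin(\delta_{\min}(t)/2)|$, $\delta_{\min}(t)=\min_k\delta_k(t)$, and $$\lambda(\rho,\sigma)=\begin{cases}0 & \rho<\sigma+2r,\\ 1 & \rho>\sigma+2r+\varepsilon_r,\\ (\rho-\sigma-2r)/\varepsilon_r & \text{otherwise.}\end{cases}$$ Assume $\delta_k(t_0)>0$ for all $k$. Then: (1) if $\rho_i(t_0)>\frac{r}{|\sin(\pi/n)|}+2r$ for all $i$ and $|\rho_i(t_0)-\rho_j(t_0)|\ge2r$ for all $i\neq j$, then $D_{ij}(t)>2r$ for all $i\ne j$ and all $t\ge t_0$ (no collisions); (2) for every initial condition, $\phi_i-\bar\phi_i\to0$, $\dot\phi_i\to\omega^*$ and $z_i\to0$ exponentially for all $i$; moreover, if in addition $\rho^*>\frac{r}{|\sin(\pi/n)|}+2r$ and $\rho_i(t_0)>\frac{r}{|\sin(\pi/n)|}+2r$ and $|\rho_i(t_0)-\rho_j(t_0)|\ge 2r$ for all $j\ne i$, then $\rho_i\to\rho^*$ exponentially.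
   Context: Robots have cylindrical coordinates $(\rho_i,\phi_i,z_i)$ (radius, phase, height) relative to a target frame, with dynamics after feedback transformation $\dot\rho_i,\dot\phi_i,\dot z_i$ equal to free inputs. Phases are real-valued (not reduced modulo $2\pi$), robots indexed counterclockwise at $t_0$. Phase averages: $\bar\phi_1=\frac{\phi_2+\phi_n-2\pi}{2}$, $\bar\phi_i=\frac{\phi_{i+1}+\phi_{i-1}}{2}$ for $2\le i\le n-1$, $\bar\phi_n=\frac{\phi_1+2\pi+\phi_{n-1}}{2}$. Consecutive phase differences: $\delta_1=\phi_1-\phi_n+2\pi$, $\delta_k=\phi_k-\phi_{k-1}$ for $2\le k\le n$. Distance $D_{ij}=\sqrt{\rho_i^2+\rho_j^2-2\rho_i\rho_j\cos(\phi_j-\phi_i)+(z_j-z_i)^2}$; a collision means $D_{ij}\le 2r$, with $r$ the safety radius. *)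

theory Defs
  imports Complex_Main
begin

text \<open>Robots are indexed by 1..n. Trajectories are functions nat => real => real.\<close>

definition phibar :: "nat \<Rightarrow> (nat \<Rightarrow> real \<Rightarrow> real) \<Rightarrow> nat \<Rightarrow> real \<Rightarrow> real" where
  "phibar n phi i t =
     (if i = 1 then (phi 2 t + phi n t - 2*pi) / 2
      else if i = n then (phi 1 t + 2*pi + phi (n-1) t) / 2
      else (phi (i+1) t + phi (i-1) t) / 2)"

definition delta :: "nat \<Rightarrow> (nat \<Rightarrow> real \<Rightarrow> real) \<Rightarrow> nat \<Rightarrow> real \<Rightarrow> real" where
  "delta n phi k t = (if k = 1 then phi 1 t - phi n t + 2*pi else phi k t - phi (k-1) t)"

definition delta_min :: "nat \<Rightarrow> (nat \<Rightarrow> real \<Rightarrow> real) \<Rightarrow> real \<Rightarrow> real" where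
  "delta_min n phi t = Min ((\<lambda>k. delta n phi k t) ` {1..n})"

definition sigma :: "real \<Rightarrow> nat \<Rightarrow> (nat \<Rightarrow> real \<Rightarrow> real) \<Rightarrow> real \<Rightarrow> real" where
  "sigma r n phi t = r / \<bar>sin (delta_min n phi t / 2)\<bar>"

definition lam :: "real \<Rightarrow> real \<Rightarrow> real \<Rightarrow> real \<Rightarrow> real" where
  "lam r eps rho s =
     (if rho < s + 2*r then 0
      else if rho > s + 2*r + eps then 1
      else (rho - s - 2*r) / eps)"

definition dist_ij :: "(nat \<Rightarrow> real \<Rightarrow> real) \<Rightarrow> (nat \<Rightarrow> real \<Rightarrow> real) \<Rightarrow> (nat \<Rightarrow> real \<Rightarrow> real)
    \<Rightarrow> nat \<Rightarrow> nat \<Rightarrow> real \<Rightarrow> real" where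
  "dist_ij rho phi z i j t =
     sqrt ((rho i t)\<^sup>2 + (rho j t)\<^sup>2 - 2 * rho i t * rho j t * cos (phi j t - phi i t)
           + (z j t - z i t)\<^sup>2)"

definition exp_conv :: "real \<Rightarrow> (real \<Rightarrow> real) \<Rightarrow> real \<Rightarrow> bool" where
  "exp_conv t0 f L \<longleftrightarrow>
     (\<exists>C \<alpha>. \<alpha> > 0 \<and> (\<forall>t\<ge>t0. \<bar>f t - L\<bar> \<le> C * exp (- \<alpha> * (t - t0))))"

end

theory Submission
  imports Defs "HOL-Analysis.Elementary_Metric_Spaces" "HOL-Analysis.Convex" "HOL-Real_Asymp.Real_Asymp"
begin

text \<open>The gaps \<open>\<delta>\<^sub>k\<close> between consecutive phases always sum to \<open>2\<pi>\<close> and obey the discrete heat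
  equation \<open>\<delta>\<^sub>k' = k\<^sub>\<phi>/2 (\<delta>\<^sub>k\<^sub>+\<^sub>1 - 2\<delta>\<^sub>k + \<delta>\<^sub>k\<^sub>-\<^sub>1)\<close> on the cycle. Summation by parts and
  a discrete Poincar\'e inequality make the energy \<open>\<Sum>(\<delta>\<^sub>k - 2\<pi>/n)\<^sup>2\<close> decay exponentially, which
  gives the phase statements; each \<open>z\<^sub>i\<close> solves a linear decay equation.
  A minimising gap has nonnegative discrete Laplacian, so \<open>\<delta>\<^sub>m\<^sub>i\<^sub>n\<close> never decreases and \<open>\<sigma>\<close>
  never increases. Hence a radius below \<open>\<sigma> + 2r\<close> is frozen (\<open>\<lambda> = 0\<close>), and one that reaches
  \<open>\<sigma> + 2r\<close> stays above it: two robots either both lie beyond \<open>\<sigma> = r / sin(\<delta>\<^sub>m\<^sub>i\<^sub>n/2)\<close>, where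
  their angular separation alone keeps them more than \<open>2r\<close> apart, or keep their initial radii,
  at least \<open>2r\<close> apart. Finally \<open>\<delta>\<^sub>m\<^sub>i\<^sub>n \<rightarrow> 2\<pi>/n\<close>, so \<open>\<sigma> \<rightarrow> r / sin(\<pi>/n)\<close>; above that
  threshold \<open>\<lambda>\<close> is eventually bounded below and \<open>\<rho>\<^sub>i \<rightarrow> \<rho>\<^sup>*\<close> exponentially.\<close>

section \<open>Derivative bounds on half-lines\<close>

lemma has_real_derivative_at_if_within_Ici:
  fixes f :: "real \<Rightarrow> real"
  assumes "(f has_real_derivative D) (at x within {a..})" "a < x"
  shows "(f has_real_derivative D) (at x)"
  using assms at_within_interior[of x "{a..}"] interior_Ici[of "a - 1" a] by auto

lemma continuous_on_Ici_if_DERIV: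
  fixes f :: "real \<Rightarrow> real"
  assumes "\<And>t. t \<ge> a \<Longrightarrow> (f has_real_derivative f' t) (at t within {a..})"
  shows "continuous_on {a..} f"
  using assms by (metis DERIV_continuous atLeast_iff continuous_on_eq_continuous_within)

lemma DERIV_within_nonpos_imp_decreasing:
  fixes f f' :: "real \<Rightarrow> real"
  assumes deriv: "\<And>x. s \<le> x \<Longrightarrow> x \<le> t \<Longrightarrow> (f has_real_derivative f' x) (at x within {a..})"
    and nonpos: "\<And>x. s \<le> x \<Longrightarrow> x \<le> t \<Longrightarrow> f' x \<le> 0" and "a \<le> s" "s \<le> t"
  shows "f t \<le> f s"
proof (rule DERIV_nonpos_imp_decreasing_open[OF \<open>s \<le> t\<close>])
  fix x assume "s < x" "x < t"
  then show "\<exists>y. DERIV f x :> y \<and> y \<le> 0"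
    using deriv[of x] nonpos[of x] has_real_derivative_at_if_within_Ici[of f "f' x" x a] \<open>a \<le> s\<close>
    by auto
next
  show "continuous_on {s..t} f"
    unfolding continuous_on_eq_continuous_within
  proof
    fix x assume x: "x \<in> {s..t}"
    have "continuous (at x within {a..}) f" using deriv[of x] x by (auto intro: DERIV_continuous)
    then show "continuous (at x within {s..t}) f"
      by (rule continuous_within_subset) (use \<open>a \<le> s\<close> in auto)
  qed
qed

lemma DERIV_within_zero_imp_constant:
  fixes f :: "real \<Rightarrow> real"
  assumes "\<And>x. s \<le> x \<Longrightarrow> x \<le> t \<Longrightarrow> (f has_real_derivative 0) (at x within {a..})"
    and "a \<le> s" "s \<le> t"
  shows "f t = f s"
proof -
  have "f t \<le> f s"
    by (rule DERIV_within_nonpos_imp_decreasing[where f' = "\<lambda>_. 0"]) (use assms in auto)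
  moreover have "- f t \<le> - f s"
    by (rule DERIV_within_nonpos_imp_decreasing[where f = "\<lambda>x. - f x" and f' = "\<lambda>_. 0"])
       (use assms in \<open>auto intro!: derivative_eq_intros\<close>)
  ultimately show ?thesis by simp
qed

lemma exp_bound_if_DERIV_le_linear:
  fixes f f' :: "real \<Rightarrow> real"
  assumes deriv: "\<And>x. s \<le> x \<Longrightarrow> x \<le> t \<Longrightarrow> (f has_real_derivative f' x) (at x within {a..})"
    and le: "\<And>x. s \<le> x \<Longrightarrow> x \<le> t \<Longrightarrow> f' x \<le> - c * f x" and "a \<le> s" "s \<le> t"
  shows "f t \<le> f s * exp (- c * (t - s))"
proof -
  have "f t * exp (c * (t - s)) \<le> f s * exp (c * (s - s))"
  proof (rule DERIV_within_nonpos_imp_decreasing[where f = "\<lambda>x. f x * exp (c * (x - s))"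
        and f' = "\<lambda>x. (f' x + c * f x) * exp (c * (x - s))"])
    fix x assume x: "s \<le> x" "x \<le> t"
    show "((\<lambda>x. f x * exp (c * (x - s))) has_real_derivative (f' x + c * f x) * exp (c * (x - s)))
        (at x within {a..})"
      using deriv[OF x] by (auto intro!: derivative_eq_intros simp: algebra_simps)
    show "(f' x + c * f x) * exp (c * (x - s)) \<le> 0"
      using le[OF x] by (simp add: mult_nonpos_nonneg)
  qed (use assms in auto)
  then have "f t * exp (c * (t - s)) * exp (- c * (t - s)) \<le> f s * exp (- c * (t - s))"
    by (simp add: mult_right_mono)
  then show ?thesis by (simp add: mult.assoc flip: exp_add)
qed

lemma abs_exp_bound_if_DERIV:
  fixes g g' :: "real \<Rightarrow> real"
  assumes deriv: "\<And>x. s \<le> x \<Longrightarrow> x \<le> t \<Longrightarrow> (g has_real_derivative g' x) (at x within {a..})"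
    and le: "\<And>x. s \<le> x \<Longrightarrow> x \<le> t \<Longrightarrow> g x * g' x \<le> - c * (g x)\<^sup>2" and "a \<le> s" "s \<le> t"
  shows "\<bar>g t\<bar> \<le> \<bar>g s\<bar> * exp (- c * (t - s))"
proof -
  have "(g t)\<^sup>2 \<le> (g s)\<^sup>2 * exp (- (2 * c) * (t - s))"
  proof (rule exp_bound_if_DERIV_le_linear[where f' = "\<lambda>x. 2 * g x * g' x"])
    fix x assume x: "s \<le> x" "x \<le> t"
    show "((\<lambda>x. (g x)\<^sup>2) has_real_derivative 2 * g x * g' x) (at x within {a..})"
      using deriv[OF x] by (auto intro!: derivative_eq_intros)
    show "2 * g x * g' x \<le> - (2 * c) * (g x)\<^sup>2" using le[OF x] by linarith
  qed (use assms in auto)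
  also have "\<dots> = (\<bar>g s\<bar> * exp (- c * (t - s)))\<^sup>2"
  proof -
    have "exp (- (2 * c) * (t - s)) = exp (- c * (t - s)) * exp (- c * (t - s))"
      by (simp flip: exp_add)
    then show ?thesis by (simp add: power_mult_distrib power2_eq_square)
  qed
  finally have "\<bar>g t\<bar>\<^sup>2 \<le> (\<bar>g s\<bar> * exp (- c * (t - s)))\<^sup>2" by simp
  then show ?thesis by (rule power2_le_imp_le) simp
qed

lemma exp_conv_zero_if_linear_ODE:
  assumes "k > 0" and "\<And>t. t \<ge> t0 \<Longrightarrow> (f has_real_derivative - k * f t) (at t within {t0..})"
  shows "exp_conv t0 f 0"
  unfolding exp_conv_def
proof (intro exI conjI allI impI)
  fix t assume "t \<ge> t0"
  then show "\<bar>f t - 0\<bar> \<le> \<bar>f t0\<bar> * exp (- k * (t - t0))"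
    using abs_exp_bound_if_DERIV[of t0 t f "\<lambda>t. - k * f t" t0 k] assms(2)
    by (simp add: power2_eq_square)
qed (use assms in auto)

lemma tendsto_exp_decay: "\<alpha> > 0 \<Longrightarrow> ((\<lambda>t::real. C * exp (- \<alpha> * (t - t0))) \<longlongrightarrow> 0) at_top"
  by real_asymp

lemma exp_conv_if_eventual_exp_bound:
  assumes "\<alpha> > 0" "t0 \<le> T"
    and early: "\<And>t. t0 \<le> t \<Longrightarrow> t \<le> T \<Longrightarrow> \<bar>f t - L\<bar> \<le> C"
    and late: "\<And>t. T \<le> t \<Longrightarrow> \<bar>f t - L\<bar> \<le> C * exp (- \<alpha> * (t - T))"
  shows "exp_conv t0 f L"
  unfolding exp_conv_def
proof (intro exI conjI allI impI)
  fix t assume t: "t \<ge> t0"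
  have C: "C \<ge> 0" using early[of t0] \<open>t0 \<le> T\<close> by linarith
  have shift: "C * exp (\<alpha> * (T - t0)) * exp (- \<alpha> * (t - t0)) = C * exp (- \<alpha> * (t - T))"
    by (simp add: mult.assoc algebra_simps flip: exp_add)
  show "\<bar>f t - L\<bar> \<le> C * exp (\<alpha> * (T - t0)) * exp (- \<alpha> * (t - t0))"
  proof (cases "t \<le> T")
    case True
    have "C \<le> C * exp (- \<alpha> * (t - T))"
      using True \<open>\<alpha> > 0\<close> C by (simp add: mult_le_cancel_left1 mult_nonneg_nonpos)
    then show ?thesis unfolding shift using early[OF t True] by linarith
  next
    case False
    then show ?thesis unfolding shift using late[of t] by simp
  qed
qed (use assms in auto)


section \<open>Crossing arguments\<close>

lemma positive_on_if_no_first_zero: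
  fixes f :: "real \<Rightarrow> real"
  assumes cont: "continuous_on {a..b} f" and "f a > 0"
    and no_zero: "\<And>\<tau>. a < \<tau> \<Longrightarrow> \<tau> \<le> b \<Longrightarrow> (\<forall>u\<in>{a..<\<tau>}. f u > 0) \<Longrightarrow> f \<tau> = 0 \<Longrightarrow> False"
  shows "\<forall>t\<in>{a..b}. f t > 0"
proof (rule ccontr)
  assume not_pos: "\<not> (\<forall>t\<in>{a..b}. f t > 0)"
  define S where "S = {u \<in> {a..b}. f u \<le> 0}"
  have "S \<noteq> {}" "bdd_below S" using not_pos unfolding S_def by (auto intro: bdd_belowI[of _ a])
  moreover have "closed S" unfolding S_def
    using continuous_on_closed_Collect_le[OF cont continuous_on_const, of 0] by auto
  ultimately have \<tau>: "Inf S \<in> S" by (rule closed_contains_Inf)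
  have before: "\<forall>u\<in>{a..<Inf S}. f u > 0"
  proof
    fix u assume u: "u \<in> {a..<Inf S}"
    show "f u > 0"
    proof (rule ccontr)
      assume "\<not> f u > 0"
      then have "u \<in> S" using u \<tau> unfolding S_def by auto
      then show False using cInf_lower[OF _ \<open>bdd_below S\<close>] u by fastforce
    qed
  qed
  have "a \<le> Inf S" "f (Inf S) \<le> 0" using \<tau> unfolding S_def by auto
  then have "a < Inf S" using \<open>f a > 0\<close> by (cases "Inf S = a") auto
  moreover have "f (Inf S) = 0"
  proof (rule ccontr)
    assume "f (Inf S) \<noteq> 0"
    then have "f (Inf S) < 0" using \<tau> unfolding S_def by auto
    then obtain x where "a \<le> x" "x \<le> Inf S" "f x = 0"
      using IVT2'[of f "Inf S" 0 a] \<open>f a > 0\<close> \<open>a < Inf S\<close> continuous_on_subset[OF cont] \<tau>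
      unfolding S_def by force
    then show False using before \<open>f (Inf S) \<noteq> 0\<close>
      by (metis atLeastLessThan_iff order_le_neq_trans less_irrefl)
  qed
  ultimately show False using no_zero before \<tau> unfolding S_def by auto
qed

lemma last_zero_before_negative:
  fixes f :: "real \<Rightarrow> real"
  assumes cont: "continuous_on {a..b} f" and "f b < 0" and "\<exists>u\<in>{a..b}. f u \<ge> 0"
  obtains \<tau> where "a \<le> \<tau>" "\<tau> < b" "f \<tau> = 0" "\<forall>u\<in>{\<tau><..b}. f u < 0"
proof -
  define S where "S = {u \<in> {a..b}. 0 \<le> f u}"
  have "S \<noteq> {}" "bdd_above S" using assms(3) unfolding S_def by (auto intro: bdd_aboveI[of _ b])
  moreover have "closed S" unfolding S_def
    using continuous_on_closed_Collect_le[OF continuous_on_const cont, of 0] by auto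
  ultimately have \<tau>: "Sup S \<in> S" by (rule closed_contains_Sup)
  have after: "\<forall>u\<in>{Sup S<..b}. f u < 0"
  proof
    fix u assume u: "u \<in> {Sup S<..b}"
    show "f u < 0"
    proof (rule ccontr)
      assume "\<not> f u < 0"
      then have "u \<in> S" using u \<tau> unfolding S_def by auto
      then show False using cSup_upper[OF _ \<open>bdd_above S\<close>] u by fastforce
    qed
  qed
  have "Sup S \<le> b" "f (Sup S) \<ge> 0" using \<tau> unfolding S_def by auto
  then have "Sup S < b" using \<open>f b < 0\<close> by (cases "Sup S = b") auto
  moreover have "f (Sup S) = 0"
  proof (rule ccontr)
    assume "f (Sup S) \<noteq> 0"
    then have "f (Sup S) > 0" using \<tau> unfolding S_def by auto
    then obtain x where "Sup S \<le> x" "x \<le> b" "f x = 0"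
      using IVT2'[of f b 0 "Sup S"] \<open>f b < 0\<close> \<open>Sup S < b\<close> continuous_on_subset[OF cont] \<tau>
      unfolding S_def by force
    then show False using after \<open>f (Sup S) \<noteq> 0\<close>
      by (metis greaterThanAtMost_iff order_le_neq_trans less_irrefl)
  qed
  ultimately show ?thesis using that \<tau> after unfolding S_def by auto
qed

lemma continuous_on_Min_image:
  fixes f :: "'a \<Rightarrow> real \<Rightarrow> real"
  assumes "finite K" "K \<noteq> {}" "\<And>k. k \<in> K \<Longrightarrow> continuous_on S (f k)"
  shows "continuous_on S (\<lambda>t. Min ((\<lambda>k. f k t) ` K))"
  using assms
proof (induction K rule: finite_ne_induct)
  case (insert x F)
  then have "continuous_on S (\<lambda>t. min (f x t) (Min ((\<lambda>k. f k t) ` F)))"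
    by (intro continuous_on_min) auto
  then show ?case using insert by simp
qed simp

text \<open>Perturbing by \<open>\<epsilon> (1 + (u - s))\<close> turns "derivative \<open>\<ge> 0\<close> at minimisers" into a strict
  increase just before any first time the minimum would drop below its value at \<open>s\<close>.\<close>
lemma Min_image_mono_if_DERIV_nonneg_at_minimizers:
  fixes f f' :: "'a \<Rightarrow> real \<Rightarrow> real" and K :: "'a set"
  defines "m \<equiv> \<lambda>t. Min ((\<lambda>k. f k t) ` K)"
  assumes K: "finite K" "K \<noteq> {}"
    and deriv: "\<And>k t. k \<in> K \<Longrightarrow> a \<le> t \<Longrightarrow> (f k has_real_derivative f' k t) (at t within {a..})"
    and nonneg: "\<And>k t. k \<in> K \<Longrightarrow> a \<le> t \<Longrightarrow> f k t = m t \<Longrightarrow> f' k t \<ge> 0"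
    and "a \<le> s" "s \<le> t"
  shows "m s \<le> m t"
proof -
  have m_le: "m u \<le> f k u" if "k \<in> K" for k u using K that by (simp add: m_def)
  have m_attained: "\<exists>k\<in>K. f k u = m u" for u
  proof -
    have "m u \<in> (\<lambda>k. f k u) ` K" unfolding m_def using K by (intro Min_in) auto
    then show ?thesis by auto
  qed
  have "continuous_on {s..t} (f k)" if "k \<in> K" for k
  proof (rule continuous_on_subset)
    show "continuous_on {a..} (f k)"
      by (rule continuous_on_Ici_if_DERIV[of a "f k" "f' k"]) (rule deriv[OF that])
  qed (use \<open>a \<le> s\<close> in auto)
  then have cont: "continuous_on {s..t} m" unfolding m_def
    by (intro continuous_on_Min_image K)
  have "m s \<le> f k t" if k: "k \<in> K" for k
  proof (rule ccontr)
    assume "\<not> m s \<le> f k t"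
    define \<epsilon> where "\<epsilon> = (m s - f k t) / (1 + (t - s))"
    have \<epsilon>: "\<epsilon> > 0" using \<open>\<not> m s \<le> f k t\<close> \<open>s \<le> t\<close> by (simp add: \<epsilon>_def)
    define W where "W u = m u - m s + \<epsilon> * (1 + (u - s))" for u
    have "\<forall>u\<in>{s..t}. W u > 0"
    proof (rule positive_on_if_no_first_zero)
      show "continuous_on {s..t} W" unfolding W_def by (intro continuous_intros cont)
      show "W s > 0" using \<epsilon> by (simp add: W_def)
    next
      fix \<tau> assume "s < \<tau>" "\<tau> \<le> t" and pos: "\<forall>u\<in>{s..<\<tau>}. W u > 0" and "W \<tau> = 0"
      obtain j where j: "j \<in> K" "f j \<tau> = m \<tau>" using m_attained by blast
      have "((\<lambda>u. f j u - m s + \<epsilon> * (1 + (u - s))) has_real_derivative f' j \<tau> + \<epsilon>) (at \<tau>)"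
        using deriv[OF j(1), of \<tau>] \<open>s < \<tau>\<close> \<open>a \<le> s\<close>
        by (intro has_real_derivative_at_if_within_Ici[where a = a]) (auto intro!: derivative_eq_intros)
      then obtain d where "d > 0" and d: "\<And>h. 0 < h \<Longrightarrow> h < d \<Longrightarrow>
          f j (\<tau> - h) - m s + \<epsilon> * (1 + (\<tau> - h - s)) < f j \<tau> - m s + \<epsilon> * (1 + (\<tau> - s))"
        using DERIV_pos_inc_left nonneg[OF j(1) _ j(2)] \<epsilon> \<open>a \<le> s\<close> \<open>s < \<tau>\<close> by force
      define h where "h = min d (\<tau> - s) / 2"
      have h: "0 < h" "h < d" "\<tau> - h \<in> {s..<\<tau>}" using \<open>d > 0\<close> \<open>s < \<tau>\<close> by (auto simp: h_def min_def field_simps)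
      have "W (\<tau> - h) \<le> f j (\<tau> - h) - m s + \<epsilon> * (1 + (\<tau> - h - s))"
        using m_le[OF j(1)] by (simp add: W_def)
      also have "\<dots> < W \<tau>" using d[OF h(1,2)] j(2) by (simp add: W_def)
      finally show False using pos h(3) \<open>W \<tau> = 0\<close> by fastforce
    qed
    then have "W t > 0" using \<open>s \<le> t\<close> by auto
    moreover have "\<epsilon> * (1 + (t - s)) = m s - f k t" using \<open>s \<le> t\<close> by (simp add: \<epsilon>_def)
    ultimately show False using m_le[OF k, of t] by (simp add: W_def)
  qed
  then show ?thesis using m_attained[of t] by force
qed


section \<open>Sums over the cycle\<close>

definition cyc_succ :: "nat \<Rightarrow> nat \<Rightarrow> nat" where
  "cyc_succ n i = (if i = n then 1 else i + 1)"

definition cyc_pred :: "nat \<Rightarrow> nat \<Rightarrow> nat" where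
  "cyc_pred n i = (if i = 1 then n else i - 1)"

lemma cyc_succ_in: "i \<in> {1..n} \<Longrightarrow> cyc_succ n i \<in> {1..n}"
  by (auto simp: cyc_succ_def)

lemma cyc_pred_in: "i \<in> {1..n} \<Longrightarrow> cyc_pred n i \<in> {1..n}"
  by (auto simp: cyc_pred_def)

lemma cyc_succ_pred: "i \<in> {1..n} \<Longrightarrow> cyc_succ n (cyc_pred n i) = i"
  by (auto simp: cyc_succ_def cyc_pred_def)

lemma cyc_pred_succ: "i \<in> {1..n} \<Longrightarrow> cyc_pred n (cyc_succ n i) = i"
  by (auto simp: cyc_succ_def cyc_pred_def)

lemma sum_cyc_succ_reindex: "(\<Sum>k\<in>{1..n}. g (cyc_succ n k)) = (\<Sum>k\<in>{1..n}. g k)"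
proof -
  have "bij_betw (cyc_succ n) {1..n} {1..n}"
    by (rule bij_betw_byWitness[of _ "cyc_pred n"])
       (use cyc_succ_in cyc_pred_in cyc_succ_pred cyc_pred_succ in auto)
  then show ?thesis by (rule sum.reindex_bij_betw)
qed

lemma sum_mult_cyclic_second_difference:
  fixes e :: "nat \<Rightarrow> real"
  shows "(\<Sum>k\<in>{1..n}. e k * (e (cyc_succ n k) - 2 * e k + e (cyc_pred n k)))
    = - (\<Sum>k\<in>{1..n}. (e (cyc_succ n k) - e k)\<^sup>2)"
proof -
  have "(\<Sum>k\<in>{1..n}. e k * e (cyc_pred n k))
      = (\<Sum>k\<in>{1..n}. e (cyc_succ n k) * e (cyc_pred n (cyc_succ n k)))"
    by (rule sum_cyc_succ_reindex[symmetric])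
  also have "\<dots> = (\<Sum>k\<in>{1..n}. e k * e (cyc_succ n k))"
    by (rule sum.cong) (simp_all add: cyc_pred_succ)
  finally have pred: "(\<Sum>k\<in>{1..n}. e k * e (cyc_pred n k)) = (\<Sum>k\<in>{1..n}. e k * e (cyc_succ n k))" .
  have sq: "(\<Sum>k\<in>{1..n}. (e (cyc_succ n k))\<^sup>2) = (\<Sum>k\<in>{1..n}. (e k)\<^sup>2)"
    by (rule sum_cyc_succ_reindex)
  show ?thesis
    using pred sq
    by (simp add: power2_diff power2_eq_square algebra_simps sum.distrib sum_subtractf
        sum_distrib_left)
qed

text \<open>A discrete Poincar\'e inequality on the cycle; the sharp constant is \<open>1 / (4 sin\<^sup>2(\<pi>/n))\<close>,
  but \<open>n\<^sup>2\<close> suffices for an exponential rate.\<close>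
lemma sum_sq_le_cyclic_differences:
  fixes e :: "nat \<Rightarrow> real"
  assumes mean_zero: "(\<Sum>k\<in>{1..n}. e k) = 0"
  shows "(\<Sum>k\<in>{1..n}. (e k)\<^sup>2) \<le> real n * real n * (\<Sum>k\<in>{1..n}. (e (cyc_succ n k) - e k)\<^sup>2)"
proof -
  define d where "d k = e (cyc_succ n k) - e k" for k
  define P where "P = (\<Sum>k\<in>{1..n}. \<bar>d k\<bar>)"
  have telescope: "e i - e 1 = (\<Sum>k\<in>{1..<i}. d k)" if i: "i \<in> {1..n}" for i
  proof -
    have "(\<Sum>k\<in>{1..<i}. d k) = (\<Sum>k\<in>{1..<i}. e (Suc k) - e k)"
      by (rule sum.cong) (use i in \<open>auto simp: d_def cyc_succ_def\<close>)
    also have "\<dots> = e i - e 1" using i by (intro sum_Suc_diff') auto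
    finally show ?thesis by simp
  qed
  have "(e i - e 1)\<^sup>2 \<le> P\<^sup>2" if i: "i \<in> {1..n}" for i
  proof -
    have "\<bar>e i - e 1\<bar> \<le> (\<Sum>k\<in>{1..<i}. \<bar>d k\<bar>)" using telescope[OF i] sum_abs by metis
    also have "\<dots> \<le> P" unfolding P_def by (rule sum_mono2) (use i in auto)
    finally show ?thesis using power_mono[of "\<bar>e i - e 1\<bar>" P 2] by simp
  qed
  then have "(\<Sum>i\<in>{1..n}. (e i - e 1)\<^sup>2) \<le> real n * P\<^sup>2"
    using sum_bounded_above[of "{1..n}" "\<lambda>i. (e i - e 1)\<^sup>2" "P\<^sup>2"] by simp
  moreover have "(\<Sum>i\<in>{1..n}. (e i - e 1)\<^sup>2)
      = (\<Sum>k\<in>{1..n}. (e k)\<^sup>2) - 2 * e 1 * (\<Sum>k\<in>{1..n}. e k) + real n * (e 1)\<^sup>2"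
    by (simp add: power2_diff sum.distrib sum_subtractf sum_distrib_left mult_ac)
  then have "(\<Sum>i\<in>{1..n}. (e i - e 1)\<^sup>2) = (\<Sum>k\<in>{1..n}. (e k)\<^sup>2) + real n * (e 1)\<^sup>2"
    using mean_zero by simp
  moreover have "0 \<le> real n * (e 1)\<^sup>2" by simp
  ultimately have "(\<Sum>k\<in>{1..n}. (e k)\<^sup>2) \<le> real n * P\<^sup>2" by linarith
  also have "\<dots> \<le> real n * (real n * (\<Sum>k\<in>{1..n}. (d k)\<^sup>2))"
    using sum_squared_le_sum_of_squares[of "\<lambda>k. \<bar>d k\<bar>" "{1..n}"] unfolding P_def
    by (intro mult_left_mono) (simp_all add: mult.commute)
  finally show ?thesis by (simp add: d_def mult.assoc)
qed

section \<open>Phase gaps and distances\<close>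

lemma phibar_minus_phi:
  assumes "n \<ge> 2" "i \<in> {1..n}"
  shows "phibar n phi i t - phi i t = (delta n phi (cyc_succ n i) t - delta n phi i t) / 2"
  using assms by (cases "i = 1"; cases "i = n")
    (auto simp: phibar_def delta_def cyc_succ_def field_simps numeral_2_eq_2)

lemma phi_diff_eq_sum_delta:
  "1 \<le> i \<Longrightarrow> i \<le> j \<Longrightarrow> phi j t - phi i t = (\<Sum>k\<in>{Suc i..j}. delta n phi k t)"
proof (induction j)
  case (Suc j)
  show ?case
  proof (cases "i = Suc j")
    case False
    then have "i \<le> j" using Suc by simp
    then show ?thesis using Suc by (simp add: sum.cl_ivl_Suc delta_def)
  qed simp
qed simp

lemma sum_delta: "n \<ge> 1 \<Longrightarrow> (\<Sum>k\<in>{1..n}. delta n phi k t) = 2 * pi"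
  using sum.atLeast_Suc_atMost[of 1 n "\<lambda>k. delta n phi k t"] phi_diff_eq_sum_delta[of 1 n phi t n]
  by (simp add: delta_def)

lemma delta_min_le: "k \<in> {1..n} \<Longrightarrow> delta_min n phi t \<le> delta n phi k t"
  unfolding delta_min_def by (rule Min_le) auto

lemma delta_min_attained: "n \<ge> 1 \<Longrightarrow> \<exists>k\<in>{1..n}. delta_min n phi t = delta n phi k t"
proof -
  assume "n \<ge> 1"
  then have "delta_min n phi t \<in> (\<lambda>k. delta n phi k t) ` {1..n}"
    unfolding delta_min_def by (intro Min_in) auto
  then show ?thesis by auto
qed

lemma delta_min_le_mean: "n \<ge> 1 \<Longrightarrow> delta_min n phi t \<le> 2 * pi / real n"
proof -
  assume "n \<ge> 1"
  have "real (card {1..n}) * delta_min n phi t \<le> (\<Sum>k\<in>{1..n}. delta n phi k t)"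
    by (rule sum_bounded_below) (rule delta_min_le)
  then show ?thesis using sum_delta[OF \<open>n \<ge> 1\<close>] \<open>n \<ge> 1\<close> by (simp add: field_simps)
qed

lemma delta_min_le_pi: "n \<ge> 2 \<Longrightarrow> delta_min n phi t \<le> pi"
proof -
  assume "n \<ge> 2"
  then have "2 * pi / real n \<le> pi" by (simp add: field_simps)
  then show ?thesis using delta_min_le_mean[of n phi t] \<open>n \<ge> 2\<close> by linarith
qed

lemma sin_half_delta_min_pos:
  assumes "n \<ge> 2" "delta_min n phi t > 0"
  shows "sin (delta_min n phi t / 2) > 0"
  using assms delta_min_le_pi[of n phi t] by (intro sin_gt_zero) auto

text \<open>The arc from robot \<open>i\<close> to robot \<open>j\<close> and its complement each contain a whole gap, so both
  are at least \<open>\<delta>\<^sub>m\<^sub>i\<^sub>n\<close>; the half-angle then lies in \<open>[\<delta>\<^sub>m\<^sub>i\<^sub>n/2, \<pi> - \<delta>\<^sub>m\<^sub>i\<^sub>n/2]\<close>.\<close>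
lemma sin_half_phase_diff_ge:
  assumes n: "n \<ge> 2" and pos: "delta_min n phi t > 0"
    and ij: "i \<in> {1..n}" "j \<in> {1..n}" "i < j"
  shows "sin (delta_min n phi t / 2) \<le> sin ((phi j t - phi i t) / 2)"
proof -
  let ?m = "delta_min n phi t" and ?\<theta> = "phi j t - phi i t"
  have gap_ge: "?m \<le> delta n phi k t" "0 \<le> delta n phi k t" if "k \<in> {1..n}" for k
    using delta_min_le[OF that, of phi t] pos by auto
  have arc: "?\<theta> = (\<Sum>k\<in>{Suc i..j}. delta n phi k t)"
    using ij by (intro phi_diff_eq_sum_delta) auto
  have sub: "{Suc i..j} \<subseteq> {1..n}" using ij by auto
  have "delta n phi j t \<le> (\<Sum>k\<in>{Suc i..j}. delta n phi k t)"
    by (rule member_le_sum) (use ij sub gap_ge in auto)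
  then have lower: "?m \<le> ?\<theta>" using gap_ge(1)[of j] ij arc by simp
  have "2 * pi - ?\<theta> = (\<Sum>k\<in>{1..n} - {Suc i..j}. delta n phi k t)"
    using sum_diff[OF _ sub, of "\<lambda>k. delta n phi k t"] sum_delta[of n phi t] n arc by simp
  moreover have "delta n phi 1 t \<le> (\<Sum>k\<in>{1..n} - {Suc i..j}. delta n phi k t)"
    by (rule member_le_sum) (use ij n gap_ge in auto)
  ultimately have upper: "?m \<le> 2 * pi - ?\<theta>" using gap_ge(1)[of 1] n by simp
  have m: "0 < ?m / 2" "?m / 2 \<le> pi / 2" using pos delta_min_le_pi[OF n] by auto
  show ?thesis
  proof (cases "?\<theta> / 2 \<le> pi / 2")
    case True
    then show ?thesis using m lower by (subst sin_mono_le_eq) auto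
  next
    case False
    then have "sin (?m / 2) \<le> sin (pi - ?\<theta> / 2)"
      using m upper False pi_gt_zero by (subst sin_mono_le_eq) (auto simp: field_simps)
    then show ?thesis by simp
  qed
qed

lemma sin_sq_half_phase_diff_ge:
  assumes "n \<ge> 2" "delta_min n phi t > 0" "i \<in> {1..n}" "j \<in> {1..n}" "i \<noteq> j"
  shows "(sin (delta_min n phi t / 2))\<^sup>2 \<le> (sin ((phi j t - phi i t) / 2))\<^sup>2"
proof -
  have "sin (delta_min n phi t / 2) \<le> \<bar>sin ((phi j t - phi i t) / 2)\<bar>"
  proof (cases "i < j")
    case True
    then show ?thesis using sin_half_phase_diff_ge[of n phi t i j] assms by force
  next
    case False
    then have "sin (delta_min n phi t / 2) \<le> sin ((phi i t - phi j t) / 2)"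
      using sin_half_phase_diff_ge[of n phi t j i] assms by simp
    also have "\<dots> = - sin ((phi j t - phi i t) / 2)"
      by (metis minus_diff_eq minus_divide_left sin_minus)
    finally show ?thesis by simp
  qed
  then show ?thesis
    using sin_half_delta_min_pos[of n phi t] assms by (metis abs_le_square_iff abs_of_pos)
qed

lemma dist_ij_eq:
  "dist_ij rho phi z i j t = sqrt ((rho i t - rho j t)\<^sup>2
      + 4 * (rho i t * rho j t) * (sin ((phi j t - phi i t) / 2))\<^sup>2 + (z j t - z i t)\<^sup>2)"
proof -
  have "cos (2 * ((phi j t - phi i t) / 2)) = 1 - 2 * (sin ((phi j t - phi i t) / 2))\<^sup>2"
    by (rule cos_double_sin)
  then have cos: "cos (phi j t - phi i t) = 1 - 2 * (sin ((phi j t - phi i t) / 2))\<^sup>2"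
    by (simp only: times_divide_eq_right nonzero_mult_div_cancel_left zero_neq_numeral)
  show ?thesis unfolding dist_ij_def cos by (simp add: power2_diff algebra_simps)
qed

lemma dist_ij_gt:
  assumes "r > 0" "S > 0" and angle: "S\<^sup>2 \<le> (sin ((phi j t - phi i t) / 2))\<^sup>2"
    and "rho i t > 0" "rho j t > 0"
    and far_or_apart: "(rho i t > r / S \<and> rho j t > r / S) \<or> 2 * r \<le> \<bar>rho i t - rho j t\<bar>"
  shows "dist_ij rho phi z i j t > 2 * r"
proof -
  define a b s where "a = rho i t" and "b = rho j t" and "s = (sin ((phi j t - phi i t) / 2))\<^sup>2"
  have ab: "a > 0" "b > 0" unfolding a_def b_def using assms by simp_all
  have "(2 * r)\<^sup>2 < (a - b)\<^sup>2 + 4 * (a * b) * s"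
    using far_or_apart unfolding a_def[symmetric] b_def[symmetric]
  proof
    assume "a > r / S \<and> b > r / S"
    then have "r / S * (r / S) < a * b" using ab assms by (intro mult_strict_mono) auto
    then have "r\<^sup>2 < a * b * S\<^sup>2" using \<open>S > 0\<close> by (simp add: power2_eq_square field_simps)
    also have "\<dots> \<le> a * b * s" using angle ab unfolding s_def by simp
    finally have "r\<^sup>2 < a * b * s" .
    moreover have "(2 * r)\<^sup>2 = 4 * r\<^sup>2" by (simp add: power_mult_distrib)
    ultimately show ?thesis using zero_le_power2[of "a - b"] by linarith
  next
    assume "2 * r \<le> \<bar>a - b\<bar>"
    then have "(2 * r)\<^sup>2 \<le> (a - b)\<^sup>2" using \<open>r > 0\<close> by (metis abs_le_square_iff abs_of_pos zero_less_mult_iff zero_less_numeral)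
    moreover have "0 < a * b * s"
      using ab angle \<open>S > 0\<close> unfolding s_def by (meson mult_pos_pos order.strict_trans2 zero_less_power)
    ultimately show ?thesis by linarith
  qed
  then have "(2 * r)\<^sup>2 < (a - b)\<^sup>2 + 4 * (a * b) * s + (z j t - z i t)\<^sup>2"
    using zero_le_power2[of "z j t - z i t"] by linarith
  then have "2 * r < sqrt ((a - b)\<^sup>2 + 4 * (a * b) * s + (z j t - z i t)\<^sup>2)"
    using \<open>r > 0\<close> by (intro real_less_rsqrt) simp
  then show ?thesis unfolding dist_ij_eq a_def b_def s_def .
qed

lemma lam_eq_0: "rho \<le> s + 2 * r \<Longrightarrow> eps > 0 \<Longrightarrow> lam r eps rho s = 0"
  by (auto simp: lam_def)

lemma lam_nonneg: "eps > 0 \<Longrightarrow> lam r eps rho s \<ge> 0"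
  by (auto simp: lam_def)

lemma lam_ge_min: "0 < g \<Longrightarrow> g \<le> rho - s - 2 * r \<Longrightarrow> eps > 0 \<Longrightarrow> min 1 (g / eps) \<le> lam r eps rho s"
  by (auto simp: lam_def divide_right_mono)


section \<open>Phase dynamics\<close>

locale phase_dynamics =
  fixes n :: nat and kp ws t0 :: real and phi dphi :: "nat \<Rightarrow> real \<Rightarrow> real"
  assumes n2: "n \<ge> 2" and kp: "kp > 0"
    and phi_deriv: "\<And>i t. i \<in> {1..n} \<Longrightarrow> t0 \<le> t \<Longrightarrow>
      (phi i has_real_derivative dphi i t) (at t within {t0..})"
    and dphi_eq: "\<And>i t. i \<in> {1..n} \<Longrightarrow> t0 \<le> t \<Longrightarrow> dphi i t = ws + kp * (phibar n phi i t - phi i t)"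
begin

lemma dphi_eq_gaps:
  "i \<in> {1..n} \<Longrightarrow> t0 \<le> t \<Longrightarrow>
    dphi i t = ws + kp / 2 * (delta n phi (cyc_succ n i) t - delta n phi i t)"
  using dphi_eq phibar_minus_phi[OF n2] by simp

lemma delta_deriv:
  assumes k: "k \<in> {1..n}" and t: "t0 \<le> t"
  shows "((\<lambda>t. delta n phi k t) has_real_derivative kp / 2 *
      (delta n phi (cyc_succ n k) t - 2 * delta n phi k t + delta n phi (cyc_pred n k) t))
      (at t within {t0..})"
proof -
  have k': "cyc_pred n k \<in> {1..n}" using cyc_pred_in[OF k] .
  have "((\<lambda>t. delta n phi k t) has_real_derivative dphi k t - dphi (cyc_pred n k) t) (at t within {t0..})"
  proof (cases "k = 1")
    case True
    then have "(\<lambda>t. delta n phi k t) = (\<lambda>t. phi 1 t - phi n t + 2 * pi)"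
      by (simp add: delta_def fun_eq_iff)
    then show ?thesis using True phi_deriv[OF k t] phi_deriv[OF k' t]
      by (auto intro!: derivative_eq_intros simp: cyc_pred_def)
  next
    case False
    then have "(\<lambda>t. delta n phi k t) = (\<lambda>t. phi k t - phi (k - 1) t)"
      by (simp add: delta_def fun_eq_iff)
    then show ?thesis using False phi_deriv[OF k t] phi_deriv[OF k' t]
      by (auto intro!: derivative_eq_intros simp: cyc_pred_def)
  qed
  moreover have "dphi k t - dphi (cyc_pred n k) t = kp / 2 *
      (delta n phi (cyc_succ n k) t - 2 * delta n phi k t + delta n phi (cyc_pred n k) t)"
    using dphi_eq_gaps[OF k t] dphi_eq_gaps[OF k' t] cyc_succ_pred[OF k] by (simp add: algebra_simps)
  ultimately show ?thesis by simp
qed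

definition gap_energy :: "real \<Rightarrow> real" where
  "gap_energy t = (\<Sum>k\<in>{1..n}. (delta n phi k t - 2 * pi / real n)\<^sup>2)"

definition decay_rate :: real where
  "decay_rate = kp / (real n * real n)"

lemma decay_rate_pos: "decay_rate > 0"
  using kp n2 by (simp add: decay_rate_def)

lemma gap_energy_nonneg: "gap_energy t \<ge> 0"
  unfolding gap_energy_def by (simp add: sum_nonneg)

lemma gap_energy_deriv:
  assumes "t0 \<le> t"
  shows "(gap_energy has_real_derivative - kp * (\<Sum>k\<in>{1..n}.
      (delta n phi (cyc_succ n k) t - delta n phi k t)\<^sup>2)) (at t within {t0..})"
proof -
  define e where "e k = delta n phi k t - 2 * pi / real n" for k
  have "(gap_energy has_real_derivative (\<Sum>k\<in>{1..n}. 2 * e k * (kp / 2 *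
      (delta n phi (cyc_succ n k) t - 2 * delta n phi k t + delta n phi (cyc_pred n k) t))))
      (at t within {t0..})"
    unfolding gap_energy_def[abs_def] e_def
    by (rule DERIV_sum) (auto intro!: derivative_eq_intros delta_deriv \<open>t0 \<le> t\<close>)
  moreover have "(\<Sum>k\<in>{1..n}. 2 * e k * (kp / 2 *
      (delta n phi (cyc_succ n k) t - 2 * delta n phi k t + delta n phi (cyc_pred n k) t)))
    = kp * (\<Sum>k\<in>{1..n}. e k * (e (cyc_succ n k) - 2 * e k + e (cyc_pred n k)))"
    by (simp add: e_def sum_distrib_left algebra_simps)
  ultimately show ?thesis
    unfolding sum_mult_cyclic_second_difference by (simp add: e_def)
qed

lemma gap_energy_decay:
  assumes "t0 \<le> t"
  shows "gap_energy t \<le> gap_energy t0 * exp (- decay_rate * (t - t0))"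
proof (rule exp_bound_if_DERIV_le_linear[OF gap_energy_deriv])
  fix x assume "t0 \<le> x"
  let ?e = "\<lambda>k. delta n phi k x - 2 * pi / real n"
  have "(\<Sum>k\<in>{1..n}. ?e k) = 0"
    using sum_delta[of n phi x] n2 by (simp add: sum_subtractf)
  then have "gap_energy x \<le> real n * real n * (\<Sum>k\<in>{1..n}. (?e (cyc_succ n k) - ?e k)\<^sup>2)"
    unfolding gap_energy_def by (rule sum_sq_le_cyclic_differences)
  also have "\<dots> = real n * real n * (\<Sum>k\<in>{1..n}. (delta n phi (cyc_succ n k) x - delta n phi k x)\<^sup>2)"
    by simp
  finally have "decay_rate * gap_energy x
      \<le> decay_rate * (real n * real n * (\<Sum>k\<in>{1..n}. (delta n phi (cyc_succ n k) x - delta n phi k x)\<^sup>2))"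
    using decay_rate_pos by (intro mult_left_mono) auto
  then show "- kp * (\<Sum>k\<in>{1..n}. (delta n phi (cyc_succ n k) x - delta n phi k x)\<^sup>2)
      \<le> - decay_rate * gap_energy x"
    using n2 by (simp add: decay_rate_def)
qed (use assms in auto)

lemma delta_deviation_bound:
  assumes k: "k \<in> {1..n}" and t: "t0 \<le> t"
  shows "\<bar>delta n phi k t - 2 * pi / real n\<bar> \<le> sqrt (gap_energy t0) * exp (- (decay_rate / 2) * (t - t0))"
proof -
  have "(delta n phi k t - 2 * pi / real n)\<^sup>2 \<le> gap_energy t"
    unfolding gap_energy_def by (rule member_le_sum) (use k in auto)
  also have "\<dots> \<le> gap_energy t0 * exp (- decay_rate * (t - t0))" using gap_energy_decay[OF t] .
  also have "\<dots> = (sqrt (gap_energy t0) * exp (- (decay_rate / 2) * (t - t0)))\<^sup>2"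
  proof -
    have "exp (- decay_rate * (t - t0)) = (exp (- (decay_rate / 2) * (t - t0)))\<^sup>2"
      by (simp add: power2_eq_square flip: exp_add)
    then show ?thesis using gap_energy_nonneg[of t0] by (simp add: power_mult_distrib)
  qed
  finally have "\<bar>delta n phi k t - 2 * pi / real n\<bar>\<^sup>2
      \<le> (sqrt (gap_energy t0) * exp (- (decay_rate / 2) * (t - t0)))\<^sup>2" by simp
  then show ?thesis by (rule power2_le_imp_le) (simp add: gap_energy_nonneg)
qed

lemma delta_succ_diff_bound:
  assumes "i \<in> {1..n}" "t0 \<le> t"
  shows "\<bar>delta n phi (cyc_succ n i) t - delta n phi i t\<bar>
    \<le> 2 * sqrt (gap_energy t0) * exp (- (decay_rate / 2) * (t - t0))"
  using delta_deviation_bound[OF cyc_succ_in[OF assms(1)] assms(2)] delta_deviation_bound[OF assms]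
  by linarith

lemma exp_conv_phase_lag: "i \<in> {1..n} \<Longrightarrow> exp_conv t0 (\<lambda>t. phi i t - phibar n phi i t) 0"
  unfolding exp_conv_def
proof (intro exI conjI allI impI)
  fix t assume "i \<in> {1..n}" "t0 \<le> t"
  then show "\<bar>phi i t - phibar n phi i t - 0\<bar>
      \<le> sqrt (gap_energy t0) * exp (- (decay_rate / 2) * (t - t0))"
    using delta_succ_diff_bound phibar_minus_phi[OF n2, of i phi t] by fastforce
qed (use decay_rate_pos in simp)

lemma exp_conv_dphi: "i \<in> {1..n} \<Longrightarrow> exp_conv t0 (dphi i) ws"
  unfolding exp_conv_def
proof (intro exI conjI allI impI)
  fix t assume i: "i \<in> {1..n}" and t: "t0 \<le> t"
  have "\<bar>dphi i t - ws\<bar> = kp / 2 * \<bar>delta n phi (cyc_succ n i) t - delta n phi i t\<bar>"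
    using dphi_eq_gaps[OF i t] kp by (simp add: abs_mult)
  also have "\<dots> \<le> kp / 2 * (2 * sqrt (gap_energy t0) * exp (- (decay_rate / 2) * (t - t0)))"
    using delta_succ_diff_bound[OF i t] kp by (intro mult_left_mono) auto
  finally show "\<bar>dphi i t - ws\<bar> \<le> kp * sqrt (gap_energy t0) * exp (- (decay_rate / 2) * (t - t0))"
    by simp
qed (use decay_rate_pos in simp)

text \<open>At a minimising gap the discrete Laplacian is nonnegative, so the minimum gap never decreases.\<close>
lemma delta_min_mono:
  assumes "t0 \<le> s" "s \<le> t"
  shows "delta_min n phi s \<le> delta_min n phi t"
  unfolding delta_min_def
proof (rule Min_image_mono_if_DERIV_nonneg_at_minimizers[OF _ _ delta_deriv _ assms])
  fix k x assume k: "k \<in> {1..n}" and "t0 \<le> x"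
    and min: "delta n phi k x = Min ((\<lambda>k. delta n phi k x) ` {1..n})"
  then show "0 \<le> kp / 2 * (delta n phi (cyc_succ n k) x - 2 * delta n phi k x
      + delta n phi (cyc_pred n k) x)"
    using delta_min_le[OF cyc_succ_in[OF k], of phi x] delta_min_le[OF cyc_pred_in[OF k], of phi x] kp
    unfolding delta_min_def by (intro mult_nonneg_nonneg) auto
qed (use n2 in auto)

lemma delta_min_pos:
  assumes "\<forall>k\<in>{1..n}. delta n phi k t0 > 0" and "t0 \<le> t"
  shows "delta_min n phi t > 0"
proof -
  have "delta_min n phi t0 > 0" using delta_min_attained[of n phi t0] n2 assms(1) by force
  then show ?thesis using delta_min_mono[of t0 t] assms(2) by simp
qed

lemma delta_min_tendsto: "((\<lambda>t. delta_min n phi t) \<longlongrightarrow> 2 * pi / real n) at_top"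
proof (rule tendsto_sandwich)
  define B where "B t = sqrt (gap_energy t0) * exp (- (decay_rate / 2) * (t - t0))" for t
  have "(B \<longlongrightarrow> 0) at_top" unfolding B_def using decay_rate_pos by (intro tendsto_exp_decay) simp
  then show "((\<lambda>t. 2 * pi / real n - B t) \<longlongrightarrow> 2 * pi / real n) at_top"
    by (auto intro: tendsto_eq_intros)
  show "eventually (\<lambda>t. 2 * pi / real n - B t \<le> delta_min n phi t) at_top"
    unfolding eventually_at_top_linorder
  proof (intro exI allI impI)
    fix t assume "t \<ge> t0"
    obtain k where "k \<in> {1..n}" "delta_min n phi t = delta n phi k t"
      using delta_min_attained[of n phi t] n2 by auto
    then show "2 * pi / real n - B t \<le> delta_min n phi t"
      using delta_deviation_bound[OF _ \<open>t \<ge> t0\<close>] unfolding B_def by fastforce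
  qed
  show "eventually (\<lambda>t. delta_min n phi t \<le> 2 * pi / real n) at_top"
    using delta_min_le_mean n2 by simp
qed simp

end


section \<open>Radial dynamics\<close>

lemma sin_pi_div_pos: "n \<ge> 2 \<Longrightarrow> sin (pi / real n) > 0"
  by (intro sin_gt_zero) (simp_all add: field_simps)

locale robot_dynamics = phase_dynamics n kp ws t0 phi dphi
  for n :: nat and kp ws t0 :: real and phi dphi :: "nat \<Rightarrow> real \<Rightarrow> real" +
  fixes r eps rs kr :: real and rho :: "nat \<Rightarrow> real \<Rightarrow> real"
  assumes r: "r > 0" and eps: "eps > 0" and kr: "kr > 0"
    and rho_deriv: "\<And>i t. i \<in> {1..n} \<Longrightarrow> t0 \<le> t \<Longrightarrow> (rho i has_real_derivative
      lam r eps (rho i t) (sigma r n phi t) * kr * (rs - rho i t)) (at t within {t0..})"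
    and delta_init: "\<forall>k\<in>{1..n}. delta n phi k t0 > 0"
begin

lemma sigma_denominator_pos: "t0 \<le> t \<Longrightarrow> sin (delta_min n phi t / 2) > 0"
  using sin_half_delta_min_pos[OF n2 delta_min_pos[OF delta_init]] .

lemma sigma_eq:
  assumes "t0 \<le> t"
  shows "sigma r n phi t = r / sin (delta_min n phi t / 2)"
  using sigma_denominator_pos[OF assms] by (simp add: sigma_def)

lemma sigma_antimono:
  assumes "t0 \<le> s" "s \<le> t"
  shows "sigma r n phi t \<le> sigma r n phi s"
proof -
  have "sin (delta_min n phi s / 2) \<le> sin (delta_min n phi t / 2)"
    using delta_min_mono[OF assms] delta_min_pos[OF delta_init, of s] delta_min_pos[OF delta_init, of t]
      delta_min_le_pi[OF n2, of phi s] delta_min_le_pi[OF n2, of phi t] assms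
    by (subst sin_mono_le_eq) auto
  then show ?thesis
    using sigma_eq[of s] sigma_eq[of t] sigma_denominator_pos[of s] assms r
    by (simp add: divide_left_mono)
qed

lemma continuous_on_sigma: "continuous_on {t0..} (sigma r n phi)"
proof -
  have "continuous_on {t0..} (\<lambda>t. delta n phi k t)" if "k \<in> {1..n}" for k
    using delta_deriv[OF that] by (rule continuous_on_Ici_if_DERIV)
  then have "continuous_on {t0..} (delta_min n phi)"
    unfolding delta_min_def[abs_def] using n2 by (intro continuous_on_Min_image) auto
  then have "continuous_on {t0..} (\<lambda>t. r / sin (delta_min n phi t / 2))"
    using sigma_denominator_pos by (intro continuous_intros) force+
  then show ?thesis by (rule continuous_on_eq) (simp add: sigma_eq)
qed

lemma sigma_tendsto: "(sigma r n phi \<longlongrightarrow> r / sin (pi / real n)) at_top"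
proof -
  have "((\<lambda>t. r / sin (delta_min n phi t / 2)) \<longlongrightarrow> r / sin (2 * pi / real n / 2)) at_top"
    using sin_pi_div_pos[OF n2] by (intro tendsto_intros delta_min_tendsto) auto
  moreover have "eventually (\<lambda>t. r / sin (delta_min n phi t / 2) = sigma r n phi t) at_top"
    using eventually_ge_at_top[of t0] by eventually_elim (simp add: sigma_eq)
  ultimately show ?thesis by (simp add: tendsto_cong)
qed

lemma continuous_on_rho: "i \<in> {1..n} \<Longrightarrow> continuous_on {t0..} (rho i)"
  by (rule continuous_on_Ici_if_DERIV[of t0 "rho i"]) (rule rho_deriv)

lemma rho_constant_while_below:
  assumes i: "i \<in> {1..n}" and "t0 \<le> a" "a \<le> t"
    and below: "\<And>u. a \<le> u \<Longrightarrow> u \<le> t \<Longrightarrow> rho i u \<le> sigma r n phi u + 2 * r"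
  shows "rho i t = rho i a"
proof (rule DERIV_within_zero_imp_constant[where f = "rho i" and a = t0])
  fix x assume x: "a \<le> x" "x \<le> t"
  then show "(rho i has_real_derivative 0) (at x within {t0..})"
    using rho_deriv[OF i, of x] lam_eq_0[OF below[OF x] eps] \<open>t0 \<le> a\<close> by simp
qed (use assms in auto)

text \<open>While a radius is below \<open>\<sigma> + 2r\<close> it cannot move; since \<open>\<sigma>\<close> never increases, a radius
  that was ever at or above \<open>\<sigma> + 2r\<close> stays there.\<close>
lemma rho_frozen_below:
  assumes i: "i \<in> {1..n}" and t: "t0 \<le> t" and below: "rho i t < sigma r n phi t + 2 * r"
  shows "rho i t = rho i t0"
proof (cases "\<forall>u\<in>{t0..t}. rho i u < sigma r n phi u + 2 * r")
  case True
  show ?thesis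
    by (rule rho_constant_while_below[OF i order.refl t]) (use True in \<open>auto intro: less_imp_le\<close>)
next
  case False
  define g where "g u = rho i u - sigma r n phi u - 2 * r" for u
  have "continuous_on {t0..t} g" unfolding g_def
    by (intro continuous_intros continuous_on_subset[OF continuous_on_rho[OF i]]
        continuous_on_subset[OF continuous_on_sigma]) auto
  moreover have "g t < 0" using below by (simp add: g_def)
  moreover have "\<exists>u\<in>{t0..t}. g u \<ge> 0" using False unfolding g_def by force
  ultimately obtain \<tau> where \<tau>: "t0 \<le> \<tau>" "\<tau> < t" "g \<tau> = 0" and after: "\<forall>u\<in>{\<tau><..t}. g u < 0"
    by (rule last_zero_before_negative)
  have "rho i t = rho i \<tau>"
  proof (rule rho_constant_while_below[OF i \<tau>(1)])
    fix u assume "\<tau> \<le> u" "u \<le> t"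
    then have "g u \<le> 0"
      using after \<tau>(3) by (metis greaterThanAtMost_iff order_le_neq_trans less_imp_le order_refl)
    then show "rho i u \<le> sigma r n phi u + 2 * r" by (simp add: g_def)
  qed (use \<tau> in auto)
  moreover have "sigma r n phi t \<le> sigma r n phi \<tau>" using sigma_antimono \<tau> by simp
  ultimately show ?thesis using \<tau>(3) below unfolding g_def by simp
qed

lemma no_collision:
  assumes ij: "i \<in> {1..n}" "j \<in> {1..n}" "i \<noteq> j" and t: "t0 \<le> t"
    and pos: "rho i t0 > 0" "rho j t0 > 0" and apart: "2 * r \<le> \<bar>rho i t0 - rho j t0\<bar>"
  shows "dist_ij rho phi z i j t > 2 * r"
proof -
  let ?S = "sin (delta_min n phi t / 2)"
  have S: "?S > 0" using sigma_denominator_pos[OF t] .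
  define q where "q = r / ?S"
  have "q > 0" using r S by (simp add: q_def)
  have frozen: "q + 2 * r \<le> rho k t \<or> rho k t = rho k t0" if "k \<in> {1..n}" for k
    using rho_frozen_below[OF that t] sigma_eq[OF t] unfolding q_def by fastforce
  have "(q < rho i t \<and> q < rho j t) \<or> 2 * r \<le> \<bar>rho i t - rho j t\<bar>" "rho i t > 0" "rho j t > 0"
    using frozen[OF ij(1)] frozen[OF ij(2)] apart pos \<open>q > 0\<close> r by (smt (verit))+
  then show ?thesis
    using dist_ij_gt[where rho = rho and z = z and phi = phi and i = i and j = j and t = t, OF r S
        sin_sq_half_phase_diff_ge[OF n2 delta_min_pos[OF delta_init t] ij]]
    unfolding q_def by blast
qed

lemma dist_rs_decreasing:
  assumes i: "i \<in> {1..n}" and "t0 \<le> s" "s \<le> t"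
  shows "\<bar>rho i t - rs\<bar> \<le> \<bar>rho i s - rs\<bar>"
proof -
  have "\<bar>rho i t - rs\<bar> \<le> \<bar>rho i s - rs\<bar> * exp (- 0 * (t - s))"
  proof (rule abs_exp_bound_if_DERIV[where a = t0])
    fix x assume x: "s \<le> x" "x \<le> t"
    show "((\<lambda>t. rho i t - rs) has_real_derivative
        lam r eps (rho i x) (sigma r n phi x) * kr * (rs - rho i x)) (at x within {t0..})"
      using rho_deriv[OF i, of x] x assms by (auto intro!: derivative_eq_intros)
    have "0 \<le> lam r eps (rho i x) (sigma r n phi x) * kr * (rho i x - rs)\<^sup>2"
      using lam_nonneg[OF eps] kr by simp
    then show "(rho i x - rs) * (lam r eps (rho i x) (sigma r n phi x) * kr * (rs - rho i x))
        \<le> - 0 * (rho i x - rs)\<^sup>2"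
      by (simp add: power2_eq_square algebra_simps)
  qed (use assms in auto)
  then show ?thesis by simp
qed

lemma rho_ge_min:
  assumes i: "i \<in> {1..n}" and t: "t0 \<le> t"
  shows "min rs (rho i t0) \<le> rho i t"
proof (cases "rho i t0 \<le> rs")
  case True
  then show ?thesis using dist_rs_decreasing[OF i order.refl t] by auto
next
  case False
  show ?thesis
  proof (rule ccontr)
    assume "\<not> ?thesis"
    then have "rho i t < rs" using False by simp
    then obtain \<tau> where "t0 \<le> \<tau>" "\<tau> \<le> t" "rho i \<tau> = rs"
      using IVT2'[of "rho i" t rs t0] False t continuous_on_subset[OF continuous_on_rho[OF i]]
      by force
    then show False using dist_rs_decreasing[OF i, of \<tau> t] \<open>rho i t < rs\<close> by simp
  qed
qed

text \<open>Once \<open>\<sigma>\<close> is close to its limit, a radius that starts (and aims) above the limiting threshold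
  keeps \<open>\<lambda>\<close> bounded away from zero, which gives a uniform exponential rate.\<close>
lemma exp_conv_rho:
  assumes i: "i \<in> {1..n}"
    and above: "r / sin (pi / real n) + 2 * r < rs" "r / sin (pi / real n) + 2 * r < rho i t0"
  shows "exp_conv t0 (rho i) rs"
proof -
  define lim_sigma where "lim_sigma = r / sin (pi / real n)"
  define g where "g = (min rs (rho i t0) - (lim_sigma + 2 * r)) / 2"
  have "g > 0" using above by (simp add: g_def lim_sigma_def)
  then have "eventually (\<lambda>t. sigma r n phi t < lim_sigma + g) at_top"
    unfolding lim_sigma_def by (intro order_tendstoD(2)[OF sigma_tendsto]) simp
  then obtain N where N: "\<And>t. N \<le> t \<Longrightarrow> sigma r n phi t < lim_sigma + g"
    unfolding eventually_at_top_linorder by blast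
  define T where "T = max N t0"
  define c where "c = min 1 (g / eps)"
  have "c > 0" using \<open>g > 0\<close> eps by (simp add: c_def)
  have lam_ge: "c \<le> lam r eps (rho i t) (sigma r n phi t)" if "T \<le> t" for t
    unfolding c_def
  proof (rule lam_ge_min[OF \<open>g > 0\<close> _ eps])
    have "N \<le> t" "t0 \<le> t" using that by (auto simp: T_def)
    then have "sigma r n phi t < lim_sigma + g" "min rs (rho i t0) \<le> rho i t"
      using N rho_ge_min[OF i] by auto
    moreover have "2 * g = min rs (rho i t0) - (lim_sigma + 2 * r)" by (simp add: g_def)
    ultimately show "g \<le> rho i t - sigma r n phi t - 2 * r" by linarith
  qed
  show ?thesis
  proof (rule exp_conv_if_eventual_exp_bound[where \<alpha> = "kr * c" and T = T])
    fix t assume "T \<le> t"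
    have "\<bar>rho i t - rs\<bar> \<le> \<bar>rho i T - rs\<bar> * exp (- (kr * c) * (t - T))"
    proof (rule abs_exp_bound_if_DERIV[where a = t0])
      fix x assume x: "T \<le> x" "x \<le> t"
      show "((\<lambda>t. rho i t - rs) has_real_derivative
          lam r eps (rho i x) (sigma r n phi x) * kr * (rs - rho i x)) (at x within {t0..})"
        using rho_deriv[OF i, of x] x by (auto intro!: derivative_eq_intros simp: T_def)
      have "kr * c * (rho i x - rs)\<^sup>2 \<le> kr * lam r eps (rho i x) (sigma r n phi x) * (rho i x - rs)\<^sup>2"
        using lam_ge[OF x(1)] kr by (intro mult_right_mono) auto
      then show "(rho i x - rs) * (lam r eps (rho i x) (sigma r n phi x) * kr * (rs - rho i x))
          \<le> - (kr * c) * (rho i x - rs)\<^sup>2"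
        by (simp add: power2_eq_square algebra_simps)
    qed (use \<open>T \<le> t\<close> in \<open>auto simp: T_def\<close>)
    also have "\<dots> \<le> \<bar>rho i t0 - rs\<bar> * exp (- (kr * c) * (t - T))"
      using dist_rs_decreasing[OF i, of t0 T] by (simp add: T_def)
    finally show "\<bar>rho i t - rs\<bar> \<le> \<bar>rho i t0 - rs\<bar> * exp (- (kr * c) * (t - T))" .
  qed (use dist_rs_decreasing[OF i] kr \<open>c > 0\<close> in \<open>auto simp: T_def\<close>)
qed

end

theorem mainTheorem10:
  fixes n :: nat and r eps rs ws kr kz kp t0 :: real
    and rho phi z dphi :: "nat \<Rightarrow> real \<Rightarrow> real"
  assumes n2: "n \<ge> 2" and r: "r > 0" and eps: "eps > 0" and rs: "rs > 0"
    and kr: "kr > 0" and kz: "kz > 0" and kp: "kp > 0"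
    and ode_rho: "\<forall>i\<in>{1..n}. \<forall>t\<ge>t0. ((rho i) has_real_derivative
          (lam r eps (rho i t) (sigma r n phi t) * kr * (rs - rho i t))) (at t within {t0..})"
    and ode_phi: "\<forall>i\<in>{1..n}. \<forall>t\<ge>t0. ((phi i) has_real_derivative dphi i t) (at t within {t0..})
          \<and> dphi i t = ws + kp * (phibar n phi i t - phi i t)"
    and ode_z: "\<forall>i\<in>{1..n}. \<forall>t\<ge>t0. ((z i) has_real_derivative (- kz * z i t)) (at t within {t0..})"
    and delta0: "\<forall>k\<in>{1..n}. delta n phi k t0 > 0"
  shows "(((\<forall>i\<in>{1..n}. rho i t0 > r / \<bar>sin (pi / real n)\<bar> + 2*r)
            \<and> (\<forall>i\<in>{1..n}. \<forall>j\<in>{1..n}. i \<noteq> j \<longrightarrow> \<bar>rho i t0 - rho j t0\<bar> \<ge> 2*r))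
         \<longrightarrow> (\<forall>i\<in>{1..n}. \<forall>j\<in>{1..n}. \<forall>t\<ge>t0. i \<noteq> j \<longrightarrow> dist_ij rho phi z i j t > 2*r))
    \<and> (\<forall>i\<in>{1..n}. exp_conv t0 (\<lambda>t. phi i t - phibar n phi i t) 0
           \<and> exp_conv t0 (dphi i) ws \<and> exp_conv t0 (z i) 0)
    \<and> (\<forall>i\<in>{1..n}. (rs > r / \<bar>sin (pi / real n)\<bar> + 2*r
            \<and> rho i t0 > r / \<bar>sin (pi / real n)\<bar> + 2*r
            \<and> (\<forall>j\<in>{1..n}. j \<noteq> i \<longrightarrow> \<bar>rho i t0 - rho j t0\<bar> \<ge> 2*r))
         \<longrightarrow> exp_conv t0 (rho i) rs)"
proof -
  interpret robot_dynamics n kp ws t0 phi dphi r eps rs kr rho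
    by unfold_locales (use n2 kp ode_phi r eps kr ode_rho delta0 in force)+
  have threshold: "r / \<bar>sin (pi / real n)\<bar> + 2 * r = r / sin (pi / real n) + 2 * r"
    "r / sin (pi / real n) + 2 * r > 0"
    using sin_pi_div_pos[OF n2] r by (simp_all add: add_pos_pos)
  show ?thesis
    unfolding threshold(1)
  proof (intro conjI impI ballI allI)
    fix i j t
    assume H: "(\<forall>i\<in>{1..n}. rho i t0 > r / sin (pi / real n) + 2 * r)
        \<and> (\<forall>i\<in>{1..n}. \<forall>j\<in>{1..n}. i \<noteq> j \<longrightarrow> 2 * r \<le> \<bar>rho i t0 - rho j t0\<bar>)"
      and ij: "i \<in> {1..n}" "j \<in> {1..n}" "t0 \<le> t" "i \<noteq> j"
    have "rho i t0 > 0" "rho j t0 > 0"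
      using H ij(1,2) threshold(2) by (meson less_trans)+
    then show "dist_ij rho phi z i j t > 2 * r"
      using no_collision[OF ij(1,2,4,3)] H ij by blast
  next
    fix i assume i: "i \<in> {1..n}"
    show "exp_conv t0 (\<lambda>t. phi i t - phibar n phi i t) 0" using exp_conv_phase_lag[OF i] .
    show "exp_conv t0 (dphi i) ws" using exp_conv_dphi[OF i] .
    show "exp_conv t0 (z i) 0" using exp_conv_zero_if_linear_ODE[OF kz] ode_z i by blast
  next
    fix i assume "i \<in> {1..n}" and "r / sin (pi / real n) + 2 * r < rs
        \<and> r / sin (pi / real n) + 2 * r < rho i t0
        \<and> (\<forall>j\<in>{1..n}. j \<noteq> i \<longrightarrow> 2 * r \<le> \<bar>rho i t0 - rho j t0\<bar>)"
    then show "exp_conv t0 (rho i) rs" using exp_conv_rho by blast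
  qed
qed

end
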